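(* Assume $\alpha_1\ge0$, $\alpha_2\ge0$, $\alpha_1+\alpha_2>0$, $\beta_1\ge0$, $\beta_2\ge0$, $\lambda>0$, and consider searching on a line with costs $\mathrm{cost}_1(x)=\alpha_1x+\beta_1$, $\mathrm{cost}_2(y)=\alpha_2y+\beta_2$. Write $u=(\alpha_1+\alpha_2)\lambda$, $a=\frac{3\beta_1+2\beta_2}{2u}$ and $b=\frac{\beta_1+\beta_2}{u}$. (i) If $a\le1$, the periodic strategy with distances $$x_i=\Big(\big((1-a)\,i+(1+b)\big)2^i-b\Big)\lambda$$ is optimal and has competitive ratio $5\alpha_1+4\alpha_2$. (ii) If $a\ge1$, let $$\Phi=1+\left(\frac{2\beta_1+\beta_2-u+\sqrt{(2\beta_1+\beta_2)^2-\beta_2^2+(\beta_2+u)^2}}{2u}\right)^{-1}.$$ Then the periodic strategy with distances $x_i=\big((1+b)\Phi^i-b\big)\lambda$ is optimal and has competitive ratio $$\frac{(\alpha_1+\alpha_2)x_1+(\beta_1+\beta_2)+(\alpha_1\lambda+\beta_1)}{\lambda}.$$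
   Context: Searching on a line with general costs. Fix $\lambda>0$. A search strategy is a sequence $\mathcal S(i)=(x_i,r_i)$, $i\ge 1$, with $x_i>0$ and $r_i\in\{\mathrm{left},\mathrm{right}\}$, such that $\sup\{x_i: r_i=\mathrm{left}\}=\sup\{x_i:r_i=\mathrm{right}\}=\infty$. At step $i$ the searcher, starting at the origin, walks distance $x_i$ along ray $r_i$ and, if the target has not been found, walks back to the origin. The target lies on one of the two rays at an unknown distance $D\ge\lambda$ from the origin ($\lambda$ is known to the searcher); it is found at the first step $j$ such that $r_j$ is the target's ray and $x_j\ge D$. Walking distance $x$ away from the origin costs $\mathrm{cost}_1(x)=\alpha_1x+\beta_1$ and walking distance $y$ back towards the origin costs $\mathrm{cost}_2(y)=\alpha_2y+\beta_2$, so the total cost when the target is found at step $j$ is $\sum_{i=1}^{j-1}\big(\mathrm{cost}_1(x_i)+\mathrm{cost}_2(x_i)\big)+\mathrm{cost}_1(D)$. The competitive ratio $CR(\mathcal S)$ is the supremum, over all target positions (either ray, any $D\ge\lambda$), of the total cost divided by $D$. A strategy is optimal if its competitive ratio is minimum among all search strategies. A periodic strategy with distances $x_i$ means $r_1\ne r_2$ and $r_{i+2}=r_i$ for all $i\ge1$. For a periodic strategy with increasing distances the competitive ratio is $\max\Big\{\frac{(\alpha_1+\alpha_2)x_1+\beta_1+\beta_2+\alpha_1\lambda+\beta_1}{\lambda},\ \sup_{n\ge1}\frac{\sum_{i=1}^{n+1}\big((\alpha_1+\alpha_2)x_i+\beta_1+\beta_2\big)+\alpha_1x_n+\beta_1}{x_n}\Big\}$.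 *)

theory Defs
  imports "HOL-Analysis.Analysis" "HOL-Library.Extended_Real"
begin

text \<open>A search strategy is given by distances x i and rays r i for i \<ge> 1
  (the values at index 0 are ignored). Rays are encoded as booleans:
  True = right, False = left.\<close>

definition search_strategy :: "(nat \<Rightarrow> real) \<Rightarrow> (nat \<Rightarrow> bool) \<Rightarrow> bool" where
  "search_strategy x r \<longleftrightarrow>
     (\<forall>i\<ge>1. x i > 0) \<and>
     (\<forall>M. \<exists>i\<ge>1. r i \<and> x i > M) \<and>
     (\<forall>M. \<exists>i\<ge>1. \<not> r i \<and> x i > M)"

definition find_step :: "(nat \<Rightarrow> real) \<Rightarrow> (nat \<Rightarrow> bool) \<Rightarrow> bool \<Rightarrow> real \<Rightarrow> nat" where
  "find_step x r s D = (LEAST j. j \<ge> 1 \<and> r j = s \<and> x j \<ge> D)"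

definition search_cost ::
  "real \<Rightarrow> real \<Rightarrow> real \<Rightarrow> real \<Rightarrow> (nat \<Rightarrow> real) \<Rightarrow> (nat \<Rightarrow> bool) \<Rightarrow> bool \<Rightarrow> real \<Rightarrow> real" where
  "search_cost \<alpha>1 \<beta>1 \<alpha>2 \<beta>2 x r s D =
     (\<Sum>i\<in>{1..<find_step x r s D}. (\<alpha>1 * x i + \<beta>1) + (\<alpha>2 * x i + \<beta>2)) + (\<alpha>1 * D + \<beta>1)"

definition comp_ratio ::
  "real \<Rightarrow> real \<Rightarrow> real \<Rightarrow> real \<Rightarrow> real \<Rightarrow> (nat \<Rightarrow> real) \<Rightarrow> (nat \<Rightarrow> bool) \<Rightarrow> ereal" where
  "comp_ratio \<alpha>1 \<beta>1 \<alpha>2 \<beta>2 lam x r =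
     (SUP p \<in> {p :: bool \<times> real. snd p \<ge> lam}.
        ereal (search_cost \<alpha>1 \<beta>1 \<alpha>2 \<beta>2 x r (fst p) (snd p) / snd p))"

definition optimal_strategy ::
  "real \<Rightarrow> real \<Rightarrow> real \<Rightarrow> real \<Rightarrow> real \<Rightarrow> (nat \<Rightarrow> real) \<Rightarrow> (nat \<Rightarrow> bool) \<Rightarrow> bool" where
  "optimal_strategy \<alpha>1 \<beta>1 \<alpha>2 \<beta>2 lam x r \<longleftrightarrow>
     search_strategy x r \<and>
     (\<forall>x' r'. search_strategy x' r' \<longrightarrow>
        comp_ratio \<alpha>1 \<beta>1 \<alpha>2 \<beta>2 lam x r \<le> comp_ratio \<alpha>1 \<beta>1 \<alpha>2 \<beta>2 lam x' r')"

definition periodic_rays :: "(nat \<Rightarrow> bool) \<Rightarrow> bool" where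
  "periodic_rays r \<longleftrightarrow> r 1 \<noteq> r 2 \<and> (\<forall>i\<ge>1. r (i + 2) = r i)"

end

theory Submission
  imports Defs
begin

(* From any strategy we extract its turning points: the record
   steps after which the searcher next makes progress on the other ray.  A
   target placed just beyond a turning point z_k is found only after the next
   turning step, so a competitive ratio R forces the inequalities of
   turns_within below on the turning-point sequence z.  After the shift
   w = z + (beta1 + beta2) / (alpha1 + alpha2) and t = (R - alpha1) / (alpha1 + alpha2),
   the partial sums U of w satisfy U (k+2) <= t (U (k+1) - U k); if t is below
   the claimed value, the growth ratios U (k+1) / U k decrease by a fixed
   amount at every step, which is impossible since they stay above 1.

   A periodic strategy whose distances make all these
   inequalities equalities ("equalizing" strategy) has competitive ratio
   exactly R.  For the two distance sequences of the theorem this reduces to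
   algebraic identities; in case (ii) Phi is the root of the characteristic
   equation ((1 + b) Phi + beta1 / u) (Phi - 1) = Phi^2. *)

definition roundtrip :: "real \<Rightarrow> real \<Rightarrow> real \<Rightarrow> real \<Rightarrow> real \<Rightarrow> real" where
  "roundtrip \<alpha>1 \<beta>1 \<alpha>2 \<beta>2 v = (\<alpha>1 * v + \<beta>1) + (\<alpha>2 * v + \<beta>2)"

lemma roundtrip_nonneg:
  assumes "\<alpha>1 \<ge> 0" "\<alpha>2 \<ge> 0" "\<beta>1 \<ge> 0" "\<beta>2 \<ge> 0" "v \<ge> 0"
  shows "roundtrip \<alpha>1 \<beta>1 \<alpha>2 \<beta>2 v \<ge> 0"
  using assms unfolding roundtrip_def by simp

text \<open>The necessary conditions that a competitive ratio \<open>R\<close> imposes on the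
  sequence \<open>z\<close> of turning points of a strategy: the first inequality comes
  from a target at distance \<open>lam\<close> on the ray not explored first, the others
  from targets just beyond a turning point.\<close>

definition turns_within ::
  "real \<Rightarrow> real \<Rightarrow> real \<Rightarrow> real \<Rightarrow> real \<Rightarrow> real \<Rightarrow> (nat \<Rightarrow> real) \<Rightarrow> bool" where
  "turns_within \<alpha>1 \<beta>1 \<alpha>2 \<beta>2 lam R z \<longleftrightarrow>
     (\<forall>k. lam \<le> z k) \<and>
     roundtrip \<alpha>1 \<beta>1 \<alpha>2 \<beta>2 (z 0) + (\<alpha>1 * lam + \<beta>1) \<le> R * lam \<and>
     (\<forall>k. (\<Sum>m\<le>Suc k. roundtrip \<alpha>1 \<beta>1 \<alpha>2 \<beta>2 (z m)) + \<alpha>1 * z k + \<beta>1 \<le> R * z k)"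

definition record_step :: "(nat \<Rightarrow> real) \<Rightarrow> (nat \<Rightarrow> bool) \<Rightarrow> real \<Rightarrow> nat \<Rightarrow> bool" where
  "record_step x r lam j \<longleftrightarrow>
     1 \<le> j \<and> lam \<le> x j \<and> (\<forall>i. 1 \<le> i \<and> i < j \<and> r i = r j \<longrightarrow> x i < x j)"

definition next_record :: "(nat \<Rightarrow> real) \<Rightarrow> (nat \<Rightarrow> bool) \<Rightarrow> real \<Rightarrow> nat \<Rightarrow> nat" where
  "next_record x r lam i = (LEAST j. i < j \<and> record_step x r lam j)"

definition turning_step :: "(nat \<Rightarrow> real) \<Rightarrow> (nat \<Rightarrow> bool) \<Rightarrow> real \<Rightarrow> nat \<Rightarrow> bool" where
  "turning_step x r lam i \<longleftrightarrow> record_step x r lam i \<and> r (next_record x r lam i) \<noteq> r i"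

fun turn_index :: "(nat \<Rightarrow> real) \<Rightarrow> (nat \<Rightarrow> bool) \<Rightarrow> real \<Rightarrow> nat \<Rightarrow> nat" where
  "turn_index x r lam 0 = (LEAST i. turning_step x r lam i)"
| "turn_index x r lam (Suc k) = (LEAST i. turn_index x r lam k < i \<and> turning_step x r lam i)"

lemma le_mult_of_le_mult_above:
  fixes C m z :: real
  assumes "\<forall>D>z. C \<le> m * D"
  shows "C \<le> m * z"
proof (rule ccontr)
  assume c: "\<not> C \<le> m * z"
  show False
  proof (cases "m \<le> 0")
    case True
    have "C \<le> m * (z + 1)" using assms by auto
    also have "\<dots> \<le> m * z" using True by (simp add: algebra_simps)
    finally show False using c by simp
  next
    case False
    define D where "D = z + (C - m * z) / (2 * m)"
    have "D > z" unfolding D_def using c False by (auto intro!: divide_pos_pos)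
    then have "C \<le> m * D" using assms by auto
    also have "m * D = m * z + (C - m * z) / 2" unfolding D_def using False by (simp add: field_simps)
    finally show False using c by (simp add: field_simps)
  qed
qed

context
  fixes x :: "nat \<Rightarrow> real" and r :: "nat \<Rightarrow> bool" and lam :: real
  assumes ss: "search_strategy x r" and lam: "lam > 0"
begin

lemma ray_unbounded: "\<exists>i\<ge>1. r i = s \<and> x i > M"
  using ss unfolding search_strategy_def by (cases s) auto

lemma record_step_exists: "\<exists>j>n. record_step x r lam j \<and> r j = s"
proof -
  define M where "M = max lam (Max (x ` {..n}))"
  define P where "P = (\<lambda>i. 1 \<le> i \<and> r i = s \<and> x i > M)"
  have ex: "\<exists>i. P i" using ray_unbounded unfolding P_def by blast
  define j where "j = (LEAST i. P i)"
  have Pj: "P j" unfolding j_def using ex by (metis LeastI_ex)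
  have before: "\<And>i. i < j \<Longrightarrow> \<not> P i" unfolding j_def using not_less_Least by blast
  have "j > n"
  proof (rule ccontr)
    assume "\<not> n < j"
    then have "x j \<le> Max (x ` {..n})" by (intro Max_ge) auto
    then have "x j \<le> M" unfolding M_def by linarith
    then show False using Pj unfolding P_def by auto
  qed
  moreover have "record_step x r lam j"
    unfolding record_step_def
  proof (intro conjI allI impI)
    show "1 \<le> j" "lam \<le> x j" using Pj unfolding P_def M_def by auto
    fix i assume "1 \<le> i \<and> i < j \<and> r i = r j"
    then have "\<not> x i > M" using before[of i] Pj unfolding P_def by auto
    then show "x i < x j" using Pj unfolding P_def by auto
  qed
  ultimately show ?thesis using Pj unfolding P_def by auto
qed

lemma next_record_props:
  assumes "record_step x r lam j" "i < j"
  shows "i < next_record x r lam i" "record_step x r lam (next_record x r lam i)"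
    "next_record x r lam i \<le> j"
proof -
  have ex: "\<exists>j. i < j \<and> record_step x r lam j" using assms by blast
  show "i < next_record x r lam i" "record_step x r lam (next_record x r lam i)"
    unfolding next_record_def using LeastI_ex[OF ex] by auto
  show "next_record x r lam i \<le> j" unfolding next_record_def using assms by (intro Least_le) auto
qed

lemma records_same_ray:
  "record_step x r lam i \<Longrightarrow> record_step x r lam i' \<Longrightarrow> i \<le> i' \<Longrightarrow>
   (\<forall>j. i \<le> j \<and> j < i' \<longrightarrow> \<not> turning_step x r lam j) \<Longrightarrow> r i = r i'"
proof (induction "i' - i" arbitrary: i rule: less_induct)
  case less
  show ?case
  proof (cases "i = i'")
    case False
    then have lt: "i < i'" using less.prems by auto
    let ?n = "next_record x r lam i"
    have n: "i < ?n" "record_step x r lam ?n" "?n \<le> i'"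
      using next_record_props[OF less.prems(2) lt] by auto
    have "\<not> turning_step x r lam i" using less.prems(4) lt by auto
    then have "r ?n = r i" using less.prems(1) unfolding turning_step_def by auto
    moreover have "r ?n = r i'" using less.hyps[of ?n] n less.prems by auto
    ultimately show ?thesis by simp
  qed simp
qed

lemma turning_step_exists: "\<exists>t>n. turning_step x r lam t"
proof -
  obtain p where p: "p > n" "record_step x r lam p" using record_step_exists by blast
  obtain q where q: "q > p" "record_step x r lam q" "r q = (\<not> r p)"
    using record_step_exists by blast
  have "\<exists>j. p \<le> j \<and> j < q \<and> turning_step x r lam j"
    using records_same_ray[OF p(2) q(2)] q(1,3) by force
  then show ?thesis using p(1) by (meson less_le_trans)
qed

lemma turn_index_props:
  shows "turning_step x r lam (turn_index x r lam k)"
    "turn_index x r lam k < turn_index x r lam (Suc k)"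
    "\<And>j. turn_index x r lam k < j \<Longrightarrow> j < turn_index x r lam (Suc k) \<Longrightarrow> \<not> turning_step x r lam j"
proof -
  have ex0: "\<exists>i. turning_step x r lam i" using turning_step_exists by blast
  have exS: "\<And>k. \<exists>i. turn_index x r lam k < i \<and> turning_step x r lam i"
    using turning_step_exists by blast
  show "turning_step x r lam (turn_index x r lam k)"
    by (cases k) (auto intro: LeastI_ex[OF ex0] LeastI2_ex[OF exS])
  show "turn_index x r lam k < turn_index x r lam (Suc k)"
    using LeastI_ex[OF exS[of k]] by simp
  fix j assume "turn_index x r lam k < j" "j < turn_index x r lam (Suc k)"
  then show "\<not> turning_step x r lam j"
    using not_less_Least[of j "\<lambda>i. turn_index x r lam k < i \<and> turning_step x r lam i"] by auto
qed

lemma turn_index_record: "record_step x r lam (turn_index x r lam k)"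
  using turn_index_props(1) unfolding turning_step_def by blast

lemma find_step_props:
  assumes "D \<ge> lam"
  shows "1 \<le> find_step x r s D" "r (find_step x r s D) = s" "D \<le> x (find_step x r s D)"
    "\<And>i. 1 \<le> i \<Longrightarrow> i < find_step x r s D \<Longrightarrow> r i = s \<Longrightarrow> x i < D"
    "record_step x r lam (find_step x r s D)"
proof -
  have ex: "\<exists>j. j \<ge> 1 \<and> r j = s \<and> x j \<ge> D"
    using ray_unbounded[of s D] by (auto intro: less_imp_le)
  let ?j = "find_step x r s D"
  have P: "?j \<ge> 1 \<and> r ?j = s \<and> x ?j \<ge> D" unfolding find_step_def by (rule LeastI_ex[OF ex])
  then show "1 \<le> ?j" "r ?j = s" "D \<le> x ?j" by auto
  show before: "\<And>i. 1 \<le> i \<Longrightarrow> i < ?j \<Longrightarrow> r i = s \<Longrightarrow> x i < D"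
  proof -
    fix i assume "1 \<le> i" "i < ?j" "r i = s"
    from \<open>i < ?j\<close> have "\<not> (i \<ge> 1 \<and> r i = s \<and> x i \<ge> D)"
      unfolding find_step_def by (rule not_less_Least)
    then show "x i < D" using \<open>1 \<le> i\<close> \<open>r i = s\<close> by auto
  qed
  show "record_step x r lam ?j" unfolding record_step_def using P assms before by force
qed

lemma first_turn_before_find:
  "turn_index x r lam 0 < find_step x r (\<not> r (turn_index x r lam 0)) lam"
proof (rule ccontr)
  let ?t = "turn_index x r lam 0" and ?j = "find_step x r (\<not> r (turn_index x r lam 0)) lam"
  assume "\<not> ?t < ?j"
  then have le: "?j \<le> ?t" by simp
  have "r ?j = r ?t"
  proof (rule records_same_ray[OF find_step_props(5)[OF order_refl] turn_index_record[of 0] le],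
      intro allI impI)
    fix i assume "?j \<le> i \<and> i < ?t"
    then show "\<not> turning_step x r lam i"
      using not_less_Least[of i "turning_step x r lam"] by simp
  qed
  then show False using find_step_props(2)[OF order_refl] by simp
qed

lemma next_turn_before_find:
  assumes D: "x (turn_index x r lam k) < D"
  shows "turn_index x r lam (Suc k) < find_step x r (r (turn_index x r lam k)) D"
proof -
  let ?t = "turn_index x r lam" and ?j = "find_step x r (r (turn_index x r lam k)) D"
  have Dl: "D \<ge> lam" using D turn_index_record[of k] unfolding record_step_def by simp
  note fj = find_step_props[OF Dl, where s="r (?t k)"]
  have after: "?t k < ?j"
  proof (rule ccontr)
    assume "\<not> ?t k < ?j"
    then consider "?j < ?t k" | "?j = ?t k" by linarith
    then have "x ?j \<le> x (?t k)"
    proof cases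
      case 1
      then show ?thesis using turn_index_record[of k] fj(1,2) unfolding record_step_def by auto
    qed simp
    then show False using D fj(3) by simp
  qed
  show ?thesis
  proof (rule ccontr)
    assume "\<not> ?t (Suc k) < ?j"
    let ?n = "next_record x r lam (?t k)"
    have n: "?t k < ?n" "record_step x r lam ?n" "?n \<le> ?j"
      using next_record_props[OF fj(5) after] by auto
    have "r ?n \<noteq> r (?t k)" using turn_index_props(1)[of k] unfolding turning_step_def by auto
    moreover have "r ?n = r ?j"
    proof (rule records_same_ray[OF n(2) fj(5) n(3)], intro allI impI)
      fix j assume "?n \<le> j \<and> j < ?j"
      then show "\<not> turning_step x r lam j"
        using turn_index_props(3)[of k j] n(1) \<open>\<not> ?t (Suc k) < ?j\<close> by simp
    qed
    ultimately show False using fj(2) by simp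
  qed
qed

lemma search_cost_ge_subset:
  assumes nn: "\<alpha>1 \<ge> 0" "\<alpha>2 \<ge> 0" "\<beta>1 \<ge> 0" "\<beta>2 \<ge> 0"
    and I: "I \<subseteq> {1..<find_step x r s D}"
  shows "(\<Sum>i\<in>I. roundtrip \<alpha>1 \<beta>1 \<alpha>2 \<beta>2 (x i)) + (\<alpha>1 * D + \<beta>1)
           \<le> search_cost \<alpha>1 \<beta>1 \<alpha>2 \<beta>2 x r s D"
proof -
  have xnn: "1 \<le> i \<Longrightarrow> 0 \<le> x i" for i
    using ss unfolding search_strategy_def by (simp add: less_imp_le)
  have "(\<Sum>i\<in>I. roundtrip \<alpha>1 \<beta>1 \<alpha>2 \<beta>2 (x i))
          \<le> (\<Sum>i\<in>{1..<find_step x r s D}. roundtrip \<alpha>1 \<beta>1 \<alpha>2 \<beta>2 (x i))"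
    using I nn by (intro sum_mono2) (auto intro!: roundtrip_nonneg xnn)
  then show ?thesis unfolding search_cost_def roundtrip_def by simp
qed

lemma turns_within_of_cost_bound:
  assumes nn: "\<alpha>1 \<ge> 0" "\<alpha>2 \<ge> 0" "\<beta>1 \<ge> 0" "\<beta>2 \<ge> 0"
    and H: "\<And>s D. D \<ge> lam \<Longrightarrow> search_cost \<alpha>1 \<beta>1 \<alpha>2 \<beta>2 x r s D \<le> R * D"
  shows "turns_within \<alpha>1 \<beta>1 \<alpha>2 \<beta>2 lam R (\<lambda>k. x (turn_index x r lam k))"
proof -
  let ?t = "turn_index x r lam" and ?c = "roundtrip \<alpha>1 \<beta>1 \<alpha>2 \<beta>2"
  have t1: "?t k \<ge> 1" "x (?t k) \<ge> lam" for k
    using turn_index_record[of k] unfolding record_step_def by auto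
  have sm: "strict_mono ?t" using turn_index_props(2) by (simp add: strict_mono_Suc_iff)
  have first: "?c (x (?t 0)) + (\<alpha>1 * lam + \<beta>1) \<le> R * lam"
  proof -
    have "{?t 0} \<subseteq> {1..<find_step x r (\<not> r (?t 0)) lam}"
      using first_turn_before_find t1(1)[of 0] by auto
    from search_cost_ge_subset[OF nn this]
    have "?c (x (?t 0)) + (\<alpha>1 * lam + \<beta>1) \<le> search_cost \<alpha>1 \<beta>1 \<alpha>2 \<beta>2 x r (\<not> r (?t 0)) lam"
      by simp
    also have "\<dots> \<le> R * lam" using H by simp
    finally show ?thesis .
  qed
  have later: "(\<Sum>m\<le>Suc k. ?c (x (?t m))) + \<alpha>1 * x (?t k) + \<beta>1 \<le> R * x (?t k)" for k
  proof -
    have "\<forall>D > x (?t k). (\<Sum>m\<le>Suc k. ?c (x (?t m))) + \<beta>1 \<le> (R - \<alpha>1) * D"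
    proof (intro allI impI)
      fix D assume D: "D > x (?t k)"
      have "?t ` {..Suc k} \<subseteq> {1..<find_step x r (r (?t k)) D}"
      proof
        fix i assume "i \<in> ?t ` {..Suc k}"
        then obtain m where m: "m \<le> Suc k" "i = ?t m" by auto
        have "?t m \<le> ?t (Suc k)" using m(1) strict_mono_less_eq[OF sm] by blast
        then show "i \<in> {1..<find_step x r (r (?t k)) D}"
          using m t1(1)[of m] next_turn_before_find[OF D] by auto
      qed
      from search_cost_ge_subset[OF nn this]
      have "(\<Sum>i\<in>?t ` {..Suc k}. ?c (x i)) + (\<alpha>1 * D + \<beta>1)
              \<le> search_cost \<alpha>1 \<beta>1 \<alpha>2 \<beta>2 x r (r (?t k)) D" .
      also have "\<dots> \<le> R * D" using H D t1(2)[of k] by simp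
      finally have "(\<Sum>i\<in>?t ` {..Suc k}. ?c (x i)) + (\<alpha>1 * D + \<beta>1) \<le> R * D" .
      moreover have "(\<Sum>i\<in>?t ` {..Suc k}. ?c (x i)) = (\<Sum>m\<le>Suc k. ?c (x (?t m)))"
        using sum.reindex[of ?t "{..Suc k}"] strict_mono_imp_inj_on[OF sm] by simp
      ultimately show "(\<Sum>m\<le>Suc k. ?c (x (?t m))) + \<beta>1 \<le> (R - \<alpha>1) * D"
        by (simp add: algebra_simps)
    qed
    then have "(\<Sum>m\<le>Suc k. ?c (x (?t m))) + \<beta>1 \<le> (R - \<alpha>1) * x (?t k)"
      by (rule le_mult_of_le_mult_above)
    then show ?thesis by (simp add: algebra_simps)
  qed
  show ?thesis unfolding turns_within_def using t1(2) first later by blast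
qed

end

lemma comp_ratio_lower_bound:
  fixes \<alpha>1 \<alpha>2 \<beta>1 \<beta>2 lam Rs :: real
  assumes nn: "\<alpha>1 \<ge> 0" "\<alpha>2 \<ge> 0" "\<beta>1 \<ge> 0" "\<beta>2 \<ge> 0" and lam: "lam > 0"
    and ss: "search_strategy x r"
    and LB: "\<And>R z. turns_within \<alpha>1 \<beta>1 \<alpha>2 \<beta>2 lam R z \<Longrightarrow> Rs \<le> R"
  shows "ereal Rs \<le> comp_ratio \<alpha>1 \<beta>1 \<alpha>2 \<beta>2 lam x r"
proof -
  let ?CR = "comp_ratio \<alpha>1 \<beta>1 \<alpha>2 \<beta>2 lam x r"
  have ge: "ereal (search_cost \<alpha>1 \<beta>1 \<alpha>2 \<beta>2 x r s D / D) \<le> ?CR" if "D \<ge> lam" for s D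
    unfolding comp_ratio_def using that by (intro SUP_upper2[of "(s, D)"]) auto
  show ?thesis
  proof (cases ?CR)
    case (real R)
    have "search_cost \<alpha>1 \<beta>1 \<alpha>2 \<beta>2 x r s D \<le> R * D" if D: "D \<ge> lam" for s D
      using ge[OF D, of s] real D lam by (simp add: divide_le_eq)
    then have "Rs \<le> R" using LB turns_within_of_cost_bound[OF ss lam nn] by blast
    then show ?thesis using real by simp
  next
    case MInf
    then show ?thesis using ge[of lam True] by simp
  qed simp
qed

lemma turns_within_normalized:
  fixes \<alpha>1 \<alpha>2 \<beta>1 \<beta>2 lam R t :: real and z w :: "nat \<Rightarrow> real"
  assumes A: "\<alpha>1 + \<alpha>2 > 0" and lam: "lam > 0" and nn: "\<beta>1 \<ge> 0" "\<beta>2 \<ge> 0"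
    and tw: "turns_within \<alpha>1 \<beta>1 \<alpha>2 \<beta>2 lam R z"
    and t_def: "t = (R - \<alpha>1) / (\<alpha>1 + \<alpha>2)"
    and w_def: "w = (\<lambda>k. z k + (\<beta>1 + \<beta>2) / (\<alpha>1 + \<alpha>2))"
  shows "t > 0" "\<And>k. w k > 0"
    "w 0 + \<beta>1 / (\<alpha>1 + \<alpha>2) \<le> t * lam"
    "\<And>k. (\<Sum>m\<le>Suc k. w m) + (\<beta>1 + t * (\<beta>1 + \<beta>2)) / (\<alpha>1 + \<alpha>2) \<le> t * w k"
proof -
  let ?A = "\<alpha>1 + \<alpha>2" and ?B = "\<beta>1 + \<beta>2"
  have z: "\<And>k. z k \<ge> lam"
    and C0: "roundtrip \<alpha>1 \<beta>1 \<alpha>2 \<beta>2 (z 0) + (\<alpha>1 * lam + \<beta>1) \<le> R * lam"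
    and Ck: "\<And>k. (\<Sum>m\<le>Suc k. roundtrip \<alpha>1 \<beta>1 \<alpha>2 \<beta>2 (z m)) + \<alpha>1 * z k + \<beta>1 \<le> R * z k"
    using tw unfolding turns_within_def by auto
  have cw: "roundtrip \<alpha>1 \<beta>1 \<alpha>2 \<beta>2 (z m) = ?A * w m" for m
    unfolding w_def roundtrip_def using A by (simp add: field_simps)
  have Q: "R - \<alpha>1 = ?A * t" unfolding t_def using A by simp
  show wpos: "w k > 0" for k
    unfolding w_def using z[of k] lam A nn by (smt (verit) divide_nonneg_pos)
  have "?A * w 0 + \<beta>1 \<le> ?A * (t * lam)" using C0 cw[of 0] Q by (simp add: algebra_simps)
  moreover have "?A * (w 0 + \<beta>1 / ?A) = ?A * w 0 + \<beta>1" using A by (simp add: distrib_left)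
  ultimately have "?A * (w 0 + \<beta>1 / ?A) \<le> ?A * (t * lam)" by simp
  then show w0: "w 0 + \<beta>1 / ?A \<le> t * lam" using A by simp
  have "0 < w 0 + \<beta>1 / ?A" using wpos[of 0] nn A by (smt (verit) divide_nonneg_pos)
  then show "t > 0" using w0 lam by (smt (verit) mult_nonpos_nonneg zero_less_mult_pos2)
  fix k
  have "(\<Sum>m\<le>Suc k. roundtrip \<alpha>1 \<beta>1 \<alpha>2 \<beta>2 (z m)) = ?A * (\<Sum>m\<le>Suc k. w m)"
    unfolding cw by (rule sum_distrib_left[symmetric])
  then have "?A * (\<Sum>m\<le>Suc k. w m) + \<beta>1 \<le> (R - \<alpha>1) * z k"
    using Ck[of k] by (simp add: algebra_simps)
  also have "\<dots> = ?A * t * w k - t * ?B" unfolding Q w_def using A by (simp add: field_simps)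
  finally have "?A * (\<Sum>m\<le>Suc k. w m) + (\<beta>1 + t * ?B) \<le> ?A * (t * w k)"
    by (simp add: algebra_simps)
  moreover have "?A * ((\<Sum>m\<le>Suc k. w m) + (\<beta>1 + t * ?B) / ?A)
                   = ?A * (\<Sum>m\<le>Suc k. w m) + (\<beta>1 + t * ?B)"
    using A by (simp add: field_simps)
  ultimately have "?A * ((\<Sum>m\<le>Suc k. w m) + (\<beta>1 + t * ?B) / ?A) \<le> ?A * (t * w k)" by simp
  then show "(\<Sum>m\<le>Suc k. w m) + (\<beta>1 + t * ?B) / ?A \<le> t * w k" using A by simp
qed

text \<open>The core contradiction: a positive increasing sequence with
  \<open>U (k+2) \<le> t (U (k+1) - U k)\<close> has growth ratios \<open>\<rho> = U (k+1) / U k > 1\<close>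
  obeying \<open>\<rho>' \<le> t - t / \<rho>\<close>; if \<open>\<rho>\<^sup>2 - t \<rho> + t \<ge> \<epsilon> \<rho>\<close> on \<open>(1, M]\<close>, each step
  lowers the ratio by \<open>\<epsilon>\<close>, which cannot go on forever.\<close>

lemma ratio_descent_contradiction:
  fixes U :: "nat \<Rightarrow> real" and t M \<epsilon> :: real
  assumes U0: "U 0 > 0" and inc: "\<And>k. U k < U (Suc k)"
    and rec: "\<And>k. U (Suc (Suc k)) \<le> t * (U (Suc k) - U k)"
    and M: "U 1 / U 0 \<le> M" and eps: "\<epsilon> > 0"
    and gap: "\<And>\<rho>. 1 < \<rho> \<Longrightarrow> \<rho> \<le> M \<Longrightarrow> \<epsilon> * \<rho> \<le> \<rho> * \<rho> - t * \<rho> + t"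
  shows False
proof -
  have pos: "U k > 0" for k by (induction k) (use U0 inc in \<open>auto intro: less_trans\<close>)
  define \<rho> where "\<rho> k = U (Suc k) / U k" for k
  have gt1: "\<rho> k > 1" for k unfolding \<rho>_def using pos[of k] inc[of k] by simp
  have step: "\<rho> (Suc k) \<le> t - t / \<rho> k" for k
  proof -
    have "\<rho> (Suc k) \<le> t * (U (Suc k) - U k) / U (Suc k)"
      unfolding \<rho>_def using rec[of k] pos[of "Suc k"] by (simp add: divide_right_mono)
    also have "\<dots> = t - t / \<rho> k" unfolding \<rho>_def using pos[of k] pos[of "Suc k"]
      by (simp add: field_simps)
    finally show ?thesis .
  qed
  have bound: "\<rho> k \<le> M - real k * \<epsilon>" for k
  proof (induction k)
    case 0 then show ?case using M unfolding \<rho>_def by simp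
  next
    case (Suc k)
    have "\<rho> k \<le> M" using Suc eps by (smt (verit) of_nat_0_le_iff mult_nonneg_nonneg)
    then have "\<epsilon> * \<rho> k \<le> \<rho> k * \<rho> k - t * \<rho> k + t" using gap gt1 by auto
    then have "\<epsilon> \<le> \<rho> k - t + t / \<rho> k" using gt1[of k] by (simp add: field_simps)
    then show ?case using Suc step[of k] by (simp add: algebra_simps)
  qed
  obtain n :: nat where "M / \<epsilon> < real n" using reals_Archimedean2 by blast
  then have "M < real n * \<epsilon>" using eps by (simp add: field_simps)
  then show False using bound[of n] gt1[of n] by linarith
qed

text \<open>Lower bound in case (i): \<open>t \<ge> 4\<close>, because for \<open>t < 4\<close> the quadratic
  \<open>\<rho>\<^sup>2 - t \<rho> + t\<close> stays above \<open>(2 \<surd>t - t) \<rho>\<close> with \<open>2 \<surd>t - t > 0\<close>.\<close>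

lemma turns_within_ge_case_i:
  fixes \<alpha>1 \<alpha>2 \<beta>1 \<beta>2 lam R :: real
  assumes A: "\<alpha>1 + \<alpha>2 > 0" and lam: "lam > 0" and nn: "\<beta>1 \<ge> 0" "\<beta>2 \<ge> 0"
    and tw: "turns_within \<alpha>1 \<beta>1 \<alpha>2 \<beta>2 lam R z"
  shows "5 * \<alpha>1 + 4 * \<alpha>2 \<le> R"
proof -
  define t where "t = (R - \<alpha>1) / (\<alpha>1 + \<alpha>2)"
  define w where "w = (\<lambda>k. z k + (\<beta>1 + \<beta>2) / (\<alpha>1 + \<alpha>2))"
  note nz = turns_within_normalized[OF A lam nn tw t_def w_def]
  have "t \<ge> 4"
  proof (rule ccontr)
    assume "\<not> t \<ge> 4"
    then have st: "sqrt t < 2" using real_sqrt_less_iff[of t 4] by simp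
    have tp: "t > 0" by (rule nz(1))
    define V where "V k = (\<Sum>m\<le>k. w m)" for k
    have "(\<beta>1 + t * (\<beta>1 + \<beta>2)) / (\<alpha>1 + \<alpha>2) \<ge> 0" using nn tp A by simp
    then have V1: "V (Suc k) \<le> t * w k" for k using nz(4)[of k] unfolding V_def by linarith
    have sq: "sqrt t * sqrt t = t" using tp by simp
    show False
    proof (rule ratio_descent_contradiction[where U=V and t=t and M=t and \<epsilon>="2 * sqrt t - t"])
      show "V 0 > 0" unfolding V_def using nz(2)[of 0] by simp
      show "V k < V (Suc k)" for k unfolding V_def using nz(2)[of "Suc k"] by simp
      show "V (Suc (Suc k)) \<le> t * (V (Suc k) - V k)" for k
        using V1[of "Suc k"] unfolding V_def by simp
      show "V 1 / V 0 \<le> t" using V1[of 0] nz(2)[of 0] unfolding V_def by (simp add: divide_le_eq)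
      have "sqrt t * (2 - sqrt t) > 0" using st tp by simp
      then show "2 * sqrt t - t > 0" using sq by (simp add: algebra_simps)
      fix \<rho> :: real
      have "0 \<le> (\<rho> - sqrt t) * (\<rho> - sqrt t)" by simp
      then show "(2 * sqrt t - t) * \<rho> \<le> \<rho> * \<rho> - t * \<rho> + t" using sq by (simp add: algebra_simps)
    qed
  qed
  then have "(\<alpha>1 + \<alpha>2) * 4 \<le> R - \<alpha>1" unfolding t_def using A by (simp add: le_divide_eq)
  then show ?thesis by (simp add: algebra_simps)
qed

lemma quadratic_gap_bound:
  fixes T t \<Phi> \<rho> :: real
  assumes T: "T * (\<Phi> - 1) = \<Phi>^2" and P1: "\<Phi> > 1" and P2: "\<Phi> \<le> 2"
    and tT: "t < T" and r1: "1 < \<rho>" and rP: "\<rho> \<le> \<Phi>"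
  shows "min ((T - t) * (\<Phi> - 1) / (2 * \<Phi>)) ((\<Phi> - 1)^2 / (4 * \<Phi>)) * \<rho> \<le> \<rho> * \<rho> - t * \<rho> + t"
proof -
  define d where "d = T - t"
  define \<epsilon> where "\<epsilon> = min (d * (\<Phi> - 1) / (2 * \<Phi>)) ((\<Phi> - 1)^2 / (4 * \<Phi>))"
  have dp: "d > 0" unfolding d_def using tT by simp
  have T2: "T \<ge> 2 * \<Phi>"
  proof -
    have "2 * \<Phi> * (\<Phi> - 1) \<le> \<Phi>^2" using P2 P1 by (simp add: power2_eq_square algebra_simps)
    then have "2 * \<Phi> * (\<Phi> - 1) \<le> T * (\<Phi> - 1)" using T by simp
    then show ?thesis using P1 by simp
  qed
  have id: "\<rho> * \<rho> - t * \<rho> + t = (\<Phi> - \<rho>) * (T - \<Phi> - \<rho>) + d * (\<rho> - 1)"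
  proof -
    have "\<Phi> * T - \<Phi>^2 = T" using T by (simp add: algebra_simps)
    then show ?thesis unfolding d_def by (simp add: algebra_simps power2_eq_square)
  qed
  have "(\<Phi> - \<rho>) * (\<Phi> - \<rho>) \<le> (\<Phi> - \<rho>) * (T - \<Phi> - \<rho>)"
    using rP T2 by (intro mult_left_mono) auto
  then have h: "(\<Phi> - \<rho>) * (\<Phi> - \<rho>) + d * (\<rho> - 1) \<le> \<rho> * \<rho> - t * \<rho> + t" using id by simp
  have "\<epsilon> \<ge> 0" unfolding \<epsilon>_def using dp P1 by simp
  then have eP: "\<epsilon> * \<rho> \<le> \<epsilon> * \<Phi>" using rP by (intro mult_left_mono) auto
  have "\<epsilon> * \<Phi> \<le> (\<Phi> - \<rho>) * (\<Phi> - \<rho>) + d * (\<rho> - 1)"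
  proof (cases "\<rho> \<ge> (1 + \<Phi>) / 2")
    case True
    have "\<epsilon> * \<Phi> \<le> d * (\<Phi> - 1) / (2 * \<Phi>) * \<Phi>" unfolding \<epsilon>_def using P1
      by (intro mult_right_mono) auto
    also have "\<dots> = d * ((\<Phi> - 1) / 2)" using P1 by (simp add: field_simps)
    also have "\<dots> \<le> d * (\<rho> - 1)" using True dp by (intro mult_left_mono) auto
    finally have "\<epsilon> * \<Phi> \<le> d * (\<rho> - 1)" .
    moreover have "0 \<le> (\<Phi> - \<rho>) * (\<Phi> - \<rho>)" by simp
    ultimately show ?thesis by linarith
  next
    case False
    have "\<epsilon> * \<Phi> \<le> (\<Phi> - 1)^2 / (4 * \<Phi>) * \<Phi>" unfolding \<epsilon>_def using P1
      by (intro mult_right_mono) auto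
    also have "\<dots> = ((\<Phi> - 1) / 2) * ((\<Phi> - 1) / 2)"
      using P1 by (simp add: field_simps power2_eq_square)
    also have "\<dots> \<le> (\<Phi> - \<rho>) * (\<Phi> - \<rho>)" using False P1 by (intro mult_mono) auto
    finally show ?thesis using dp r1 by (smt (verit) mult_nonneg_nonneg)
  qed
  then show ?thesis using h eP unfolding \<epsilon>_def d_def by linarith
qed

text \<open>Here the descent is run on
  \<open>U k = w 0 + \<dots> + w (k - 1) + K\<close>, whose initial ratio is at most \<open>\<Phi>\<close>.\<close>

lemma turns_within_ge_case_ii:
  fixes \<alpha>1 \<alpha>2 \<beta>1 \<beta>2 lam R p b \<Phi> :: real
  assumes A: "\<alpha>1 + \<alpha>2 > 0" and lam: "lam > 0" and nn: "\<beta>1 \<ge> 0" "\<beta>2 \<ge> 0"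
    and p_def: "\<beta>1 = p * ((\<alpha>1 + \<alpha>2) * lam)" and b_def: "\<beta>1 + \<beta>2 = b * ((\<alpha>1 + \<alpha>2) * lam)"
    and bpos: "b > 0" and P1: "\<Phi> > 1" and P2: "\<Phi> \<le> 2"
    and T: "((1 + b) * \<Phi> + p) * (\<Phi> - 1) = \<Phi>^2"
    and tw: "turns_within \<alpha>1 \<beta>1 \<alpha>2 \<beta>2 lam R z"
  shows "\<alpha>1 + (\<alpha>1 + \<alpha>2) * ((1 + b) * \<Phi> + p) \<le> R"
proof -
  define t where "t = (R - \<alpha>1) / (\<alpha>1 + \<alpha>2)"
  define w where "w = (\<lambda>k. z k + (\<beta>1 + \<beta>2) / (\<alpha>1 + \<alpha>2))"
  define TT where "TT = (1 + b) * \<Phi> + p"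
  note nz = turns_within_normalized[OF A lam nn tw t_def w_def]
  have tp: "t > 0" by (rule nz(1))
  have "0 < (\<alpha>1 + \<alpha>2) * lam" using A lam by simp
  then have pp: "p \<ge> 0" using p_def nn by (simp add: zero_le_mult_iff)
  have b1A: "\<beta>1 / (\<alpha>1 + \<alpha>2) = p * lam" unfolding p_def using A by simp
  have BA: "(\<beta>1 + \<beta>2) / (\<alpha>1 + \<alpha>2) = b * lam" unfolding b_def using A by simp
  have "t \<ge> TT"
  proof (rule ccontr)
    assume "\<not> t \<ge> TT"
    then have tT: "t < TT" by simp
    define K where "K = lam * (p + t * b)"
    have "(\<beta>1 + t * (\<beta>1 + \<beta>2)) / (\<alpha>1 + \<alpha>2)
            = \<beta>1 / (\<alpha>1 + \<alpha>2) + t * ((\<beta>1 + \<beta>2) / (\<alpha>1 + \<alpha>2))"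
      by (simp only: add_divide_distrib[of \<beta>1 "t * (\<beta>1 + \<beta>2)"]
          times_divide_eq_right[of t "\<beta>1 + \<beta>2"])
    also have "\<dots> = K" unfolding b1A BA K_def by (simp add: algebra_simps)
    finally have Keq: "(\<beta>1 + t * (\<beta>1 + \<beta>2)) / (\<alpha>1 + \<alpha>2) = K" .
    have Kp: "K > 0" unfolding K_def using lam pp tp bpos by (simp add: add_nonneg_pos)
    define U where "U k = (\<Sum>m<k. w m) + K" for k
    have M0: "U 1 / U 0 \<le> t * (1 + b) / (p + t * b)"
    proof -
      have "U 1 \<le> t * lam * (1 + b)" unfolding U_def K_def using nz(3) b1A by (simp add: algebra_simps)
      then have "U 1 / U 0 \<le> t * lam * (1 + b) / U 0"
        using Kp unfolding U_def by (intro divide_right_mono) auto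
      also have "\<dots> = t * (1 + b) / (p + t * b)" unfolding U_def K_def using lam by simp
      finally show ?thesis .
    qed
    have MP: "t * (1 + b) / (p + t * b) \<le> \<Phi>"
    proof -
      have TTp: "TT > 0" unfolding TT_def using pp P1 bpos by (simp add: add_pos_nonneg)
      have key: "TT * (1 + b - b * \<Phi>) = \<Phi> * p"
      proof -
        have "\<Phi> * p = \<Phi> * TT - (1 + b) * \<Phi>^2" unfolding TT_def by (simp add: algebra_simps power2_eq_square)
        also have "\<dots> = \<Phi> * TT - (1 + b) * (TT * (\<Phi> - 1))" using T unfolding TT_def by simp
        finally show ?thesis by (simp add: algebra_simps)
      qed
      have "TT * (1 + b - b * \<Phi>) \<ge> 0" using key P1 pp by simp
      then have nn2: "1 + b - b * \<Phi> \<ge> 0" using TTp by (simp add: zero_le_mult_iff)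
      have "t * (1 + b - b * \<Phi>) \<le> TT * (1 + b - b * \<Phi>)" using tT nn2 by (intro mult_right_mono) auto
      then have "t * (1 + b) \<le> \<Phi> * (p + t * b)" using key by (simp add: algebra_simps)
      moreover have "p + t * b > 0" using pp tp bpos by (simp add: add_nonneg_pos)
      ultimately show ?thesis by (simp add: divide_le_eq)
    qed
    show False
    proof (rule ratio_descent_contradiction[where U=U and t=t and M="t * (1 + b) / (p + t * b)"
          and \<epsilon>="min ((TT - t) * (\<Phi> - 1) / (2 * \<Phi>)) ((\<Phi> - 1)^2 / (4 * \<Phi>))"])
      show "U 0 > 0" unfolding U_def using Kp by simp
      show "U k < U (Suc k)" for k unfolding U_def using nz(2)[of k] by simp
      show "U (Suc (Suc k)) \<le> t * (U (Suc k) - U k)" for k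
        using nz(4)[of k] Keq unfolding U_def by (simp add: lessThan_Suc_atMost[symmetric])
      show "U 1 / U 0 \<le> t * (1 + b) / (p + t * b)" by (rule M0)
      show "min ((TT - t) * (\<Phi> - 1) / (2 * \<Phi>)) ((\<Phi> - 1)^2 / (4 * \<Phi>)) > 0"
        using tT P1 by simp
      fix \<rho> :: real assume "1 < \<rho>" "\<rho> \<le> t * (1 + b) / (p + t * b)"
      then show "min ((TT - t) * (\<Phi> - 1) / (2 * \<Phi>)) ((\<Phi> - 1)^2 / (4 * \<Phi>)) * \<rho> \<le> \<rho> * \<rho> - t * \<rho> + t"
        using quadratic_gap_bound[of TT \<Phi> t \<rho>] T P1 P2 tT MP unfolding TT_def by simp
    qed
  qed
  then have "TT * (\<alpha>1 + \<alpha>2) \<le> R - \<alpha>1" unfolding t_def using A by (simp add: le_divide_eq)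
  then show ?thesis unfolding TT_def by (simp add: algebra_simps)
qed

lemma periodic_rays_parity:
  assumes "periodic_rays r"
  shows "r (2 * k + 1) = r 1" "r (2 * k + 2) = r 2" "r 2 = (\<not> r 1)"
proof -
  have p: "\<And>i. i \<ge> 1 \<Longrightarrow> r (i + 2) = r i" "r 1 \<noteq> r 2"
    using assms unfolding periodic_rays_def by auto
  show "r (2 * k + 1) = r 1"
  proof (induction k)
    case (Suc k)
    have "r (2 * Suc k + 1) = r ((2 * k + 1) + 2)" by simp
    then show ?case using p(1)[of "2 * k + 1"] Suc by simp
  qed simp
  show "r (2 * k + 2) = r 2"
  proof (induction k)
    case (Suc k)
    have "r (2 * Suc k + 2) = r ((2 * k + 2) + 2)" by simp
    then show ?case using p(1)[of "2 * k + 2"] Suc by simp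
  qed (simp add: eval_nat_numeral)
  show "r 2 = (\<not> r 1)" using p(2) by auto
qed

lemma increments_unbounded:
  fixes x :: "nat \<Rightarrow> real"
  assumes d: "d > 0" and incr: "\<And>n. d \<le> x (Suc n) - x n"
  shows "\<exists>i. M < x i"
proof -
  have lin: "x 0 + real n * d \<le> x n" for n
  proof (induction n)
    case (Suc n) then show ?case using incr[of n] by (simp add: algebra_simps)
  qed simp
  obtain n :: nat where "(M - x 0) / d < real n" using reals_Archimedean2 by blast
  then have "M < x 0 + real n * d" using d by (simp add: field_simps)
  then show ?thesis using lin by (meson less_le_trans)
qed

lemma periodic_search_strategy:
  fixes x :: "nat \<Rightarrow> real"
  assumes per: "periodic_rays r" and x0: "x 0 > 0"
    and d: "d > 0" and incr: "\<And>n. d \<le> x (Suc n) - x n"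
  shows "search_strategy x r"
proof -
  have "x n < x (Suc n)" for n using d incr[of n] by linarith
  then have sm: "strict_mono x" by (simp add: strict_mono_Suc_iff)
  have pos: "0 < x i" for i using x0 strict_mono_less_eq[OF sm, of 0 i] by simp
  have "\<exists>i\<ge>1. r i = s \<and> M < x i" for s M
  proof -
    obtain i where "x i > M" using increments_unbounded[where x=x, OF d incr] by blast
    then have "x (2*i+1) > M" "x (2*i+2) > M"
      using strict_mono_less_eq[OF sm, of i "2*i+1"] strict_mono_less_eq[OF sm, of i "2*i+2"] by auto
    then show ?thesis
      using periodic_rays_parity(1,2)[OF per, of i] periodic_rays_parity(3)[OF per]
      by (cases "r 1 = s"; force)
  qed
  then show ?thesis unfolding search_strategy_def using pos by blast
qed

text \<open>If every step of a periodic strategy is a turning point at which the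
  inequality of \<open>turns_within\<close> holds with equality, its cost ratio never
  exceeds \<open>R\<close>: a target found at step \<open>n + 2\<close> lies beyond \<open>x n\<close>, the previous
  step on its ray.\<close>

lemma periodic_cost_le:
  fixes x :: "nat \<Rightarrow> real"
  assumes nn: "\<alpha>1 \<ge> 0" "\<alpha>2 \<ge> 0" "\<beta>1 \<ge> 0" "\<beta>2 \<ge> 0" and lam: "lam > 0"
    and per: "periodic_rays r" and ss: "search_strategy x r" and x0: "x 0 = lam"
    and F: "\<And>n. (\<Sum>i\<in>{1..<n+2}. roundtrip \<alpha>1 \<beta>1 \<alpha>2 \<beta>2 (x i)) + \<alpha>1 * x n + \<beta>1 = R * x n"
    and D: "D \<ge> lam"
  shows "search_cost \<alpha>1 \<beta>1 \<alpha>2 \<beta>2 x r s D \<le> R * D"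
proof -
  let ?c = "roundtrip \<alpha>1 \<beta>1 \<alpha>2 \<beta>2" and ?j = "find_step x r s D"
  note fp = find_step_props[OF ss lam D, where s=s]
  have cost: "search_cost \<alpha>1 \<beta>1 \<alpha>2 \<beta>2 x r s D = (\<Sum>i\<in>{1..<?j}. ?c (x i)) + (\<alpha>1 * D + \<beta>1)"
    unfolding search_cost_def roundtrip_def by simp
  have F0: "?c (x 1) + \<alpha>1 * lam + \<beta>1 = R * lam" using F[of 0] x0 by simp
  have "x 1 > 0" using ss unfolding search_strategy_def by simp
  then have c1: "?c (x 1) \<ge> 0" using roundtrip_nonneg[OF nn] by simp
  have "\<alpha>1 * lam \<le> R * lam" using F0 c1 nn by linarith
  then have "\<alpha>1 \<le> R" using lam by simp
  then have mono: "(R - \<alpha>1) * y \<le> (R - \<alpha>1) * D" if "y \<le> D" for y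
    using that by (intro mult_left_mono) auto
  consider "?j = 1" | "?j = 2" | "?j \<ge> 3" using fp(1) by linarith
  then show ?thesis
  proof cases
    case 1
    then show ?thesis using cost F0 c1 mono[OF D] by (simp add: algebra_simps)
  next
    case 2
    then show ?thesis using cost F0 mono[OF D] by (simp add: numeral_2_eq_2 algebra_simps)
  next
    case 3
    define n where "n = ?j - 2"
    have jn: "?j = n + 2" "n \<ge> 1" unfolding n_def using 3 by auto
    have "r n = r (n + 2)" using per jn(2) unfolding periodic_rays_def by auto
    then have "x n < D" using fp(2) fp(4)[of n] jn by simp
    then show ?thesis using cost F[of n] jn(1) mono[of "x n"] by (simp add: algebra_simps)
  qed
qed

text \<open>The bound is attained by a target at distance \<open>lam\<close> on ray \<open>r 2\<close>.\<close>

lemma periodic_comp_ratio: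
  fixes x :: "nat \<Rightarrow> real"
  assumes nn: "\<alpha>1 \<ge> 0" "\<alpha>2 \<ge> 0" "\<beta>1 \<ge> 0" "\<beta>2 \<ge> 0" and lam: "lam > 0"
    and per: "periodic_rays r" and ss: "search_strategy x r" and x0: "x 0 = lam" and x2: "lam \<le> x 2"
    and F: "\<And>n. (\<Sum>i\<in>{1..<n+2}. roundtrip \<alpha>1 \<beta>1 \<alpha>2 \<beta>2 (x i)) + \<alpha>1 * x n + \<beta>1 = R * x n"
  shows "comp_ratio \<alpha>1 \<beta>1 \<alpha>2 \<beta>2 lam x r = ereal R"
  unfolding comp_ratio_def
proof (rule antisym)
  show "(SUP p\<in>{p. lam \<le> snd p}. ereal (search_cost \<alpha>1 \<beta>1 \<alpha>2 \<beta>2 x r (fst p) (snd p) / snd p))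
          \<le> ereal R"
  proof (rule SUP_least)
    fix p :: "bool \<times> real" assume "p \<in> {p. lam \<le> snd p}"
    then have D: "lam \<le> snd p" by simp
    then show "ereal (search_cost \<alpha>1 \<beta>1 \<alpha>2 \<beta>2 x r (fst p) (snd p) / snd p) \<le> ereal R"
      using periodic_cost_le[OF nn lam per ss x0 F D, of "fst p"] lam by (simp add: divide_le_eq)
  qed
  have "find_step x r (\<not> r 1) lam = 2"
    unfolding find_step_def
  proof (rule Least_equality)
    show "(2::nat) \<ge> 1 \<and> r 2 = (\<not> r 1) \<and> x 2 \<ge> lam"
      using periodic_rays_parity(3)[OF per] x2 by simp
    fix j assume "1 \<le> j \<and> r j = (\<not> r 1) \<and> lam \<le> x j"
    then show "2 \<le> j" by (cases "j = 1") auto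
  qed
  then have "search_cost \<alpha>1 \<beta>1 \<alpha>2 \<beta>2 x r (\<not> r 1) lam / lam = R"
    using F[of 0] x0 lam unfolding search_cost_def roundtrip_def by (simp add: numeral_2_eq_2)
  then show "ereal R \<le> (SUP p\<in>{p. lam \<le> snd p}.
               ereal (search_cost \<alpha>1 \<beta>1 \<alpha>2 \<beta>2 x r (fst p) (snd p) / snd p))"
    by (intro SUP_upper2[of "(\<not> r 1, lam)"]) auto
qed

lemma equalizing_strategy_optimal:
  fixes x :: "nat \<Rightarrow> real"
  assumes nn: "\<alpha>1 \<ge> 0" "\<alpha>2 \<ge> 0" "\<beta>1 \<ge> 0" "\<beta>2 \<ge> 0" and lam: "lam > 0"
    and per: "periodic_rays r" and x0: "x 0 = lam"
    and d: "d > 0" and incr: "\<And>n. d \<le> x (Suc n) - x n"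
    and first: "roundtrip \<alpha>1 \<beta>1 \<alpha>2 \<beta>2 (x 1) + (\<alpha>1 * lam + \<beta>1) = R * lam"
    and step: "\<And>n. roundtrip \<alpha>1 \<beta>1 \<alpha>2 \<beta>2 (x (n+2)) = (R - \<alpha>1) * (x (Suc n) - x n)"
    and lower: "\<And>R' z. turns_within \<alpha>1 \<beta>1 \<alpha>2 \<beta>2 lam R' z \<Longrightarrow> R \<le> R'"
  shows "optimal_strategy \<alpha>1 \<beta>1 \<alpha>2 \<beta>2 lam x r \<and> comp_ratio \<alpha>1 \<beta>1 \<alpha>2 \<beta>2 lam x r = ereal R"
proof -
  have ss: "search_strategy x r" using periodic_search_strategy[where x=x, OF per _ d incr] x0 lam by simp
  have F: "(\<Sum>i\<in>{1..<n+2}. roundtrip \<alpha>1 \<beta>1 \<alpha>2 \<beta>2 (x i)) + \<alpha>1 * x n + \<beta>1 = R * x n" for n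
  proof (induction n)
    case 0 then show ?case using first x0 by (simp add: numeral_2_eq_2)
  next
    case (Suc n) then show ?case using step[of n] by (simp add: algebra_simps)
  qed
  have "lam \<le> x 2" using incr[of 0] incr[of 1] d x0 by (simp add: numeral_2_eq_2)
  then have cr: "comp_ratio \<alpha>1 \<beta>1 \<alpha>2 \<beta>2 lam x r = ereal R"
    by (rule periodic_comp_ratio[OF nn lam per ss x0 _ F])
  have "comp_ratio \<alpha>1 \<beta>1 \<alpha>2 \<beta>2 lam x r \<le> comp_ratio \<alpha>1 \<beta>1 \<alpha>2 \<beta>2 lam x' r'"
    if "search_strategy x' r'" for x' r'
    using comp_ratio_lower_bound[OF nn lam that lower] cr by simp
  then show ?thesis using ss cr unfolding optimal_strategy_def by blast
qed

text \<open>The growth rate of case (ii): for \<open>2 u \<le> 3 \<beta>1 + 2 \<beta>2\<close>, \<open>\<Phi> = 1 + 1 / q\<close>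
  where \<open>q \<ge> 1\<close> is the positive root of \<open>u q\<^sup>2 - (2 \<beta>1 + \<beta>2 - u) q - (\<beta>1 + \<beta>2) = 0\<close>;
  equivalently \<open>\<Phi>\<close> solves the characteristic equation of the equalizing
  recursion.\<close>

lemma characteristic_root:
  fixes \<beta>1 \<beta>2 u :: real
  assumes nn: "\<beta>1 \<ge> 0" "\<beta>2 \<ge> 0" and u: "u > 0" and a1: "2 * u \<le> 3 * \<beta>1 + 2 * \<beta>2"
  defines "\<Phi> \<equiv> 1 + inverse ((2 * \<beta>1 + \<beta>2 - u
                 + sqrt ((2 * \<beta>1 + \<beta>2)^2 - \<beta>2^2 + (\<beta>2 + u)^2)) / (2 * u))"
  shows "1 < \<Phi>" "\<Phi> \<le> 2" "((1 + (\<beta>1 + \<beta>2) / u) * \<Phi> + \<beta>1 / u) * (\<Phi> - 1) = \<Phi>^2"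
proof -
  define s where "s = 2 * \<beta>1 + \<beta>2"
  define Dd where "Dd = (2 * \<beta>1 + \<beta>2)^2 - \<beta>2^2 + (\<beta>2 + u)^2"
  define q where "q = (s - u + sqrt Dd) / (2 * u)"
  have Phiq: "\<Phi> = 1 + inverse q" unfolding \<Phi>_def q_def Dd_def s_def by simp
  have Ddeq: "Dd = (s - u)^2 + 4 * (\<beta>1 + \<beta>2) * u"
    unfolding Dd_def s_def by (simp add: algebra_simps power2_eq_square)
  have Dd_nn: "Dd \<ge> 0" unfolding Ddeq using nn u by simp
  have qv: "2 * u * q - (s - u) = sqrt Dd" unfolding q_def using u by simp
  have "3 * u - s \<le> sqrt Dd"
  proof (cases "3 * u - s \<le> 0")
    case False
    have "Dd - (3 * u - s)^2 = 4 * u * ((s + (\<beta>1 + \<beta>2)) - 2 * u)"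
      unfolding Ddeq s_def by (simp add: algebra_simps power2_eq_square)
    also have "\<dots> \<ge> 0" using a1 u unfolding s_def by simp
    finally show ?thesis by (intro real_le_rsqrt) simp
  qed (use Dd_nn real_sqrt_ge_zero[of Dd] in linarith)
  then have "2 * u * 1 \<le> 2 * u * q" using qv by linarith
  then have q1: "q \<ge> 1" using u by simp
  have "(2 * u * q - (s - u))^2 = Dd" using qv Dd_nn by simp
  then have "4 * u * (u * q^2 - (s - u) * q - (\<beta>1 + \<beta>2)) = 0"
    unfolding Ddeq by (simp add: algebra_simps power2_eq_square)
  then have qeq: "u * q^2 - (s - u) * q - (\<beta>1 + \<beta>2) = 0" using u by simp
  show "1 < \<Phi>" unfolding Phiq using q1 by simp
  show "\<Phi> \<le> 2" unfolding Phiq using q1 by (simp add: inverse_le_1_iff)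
  have "((1 + (\<beta>1 + \<beta>2) / u) * \<Phi> + \<beta>1 / u) * (\<Phi> - 1) - \<Phi>^2
          = (u * q^2 - (s - u) * q - (\<beta>1 + \<beta>2)) / (- u * q^2)"
    unfolding Phiq s_def using q1 u by (simp add: field_simps power2_eq_square)
  then show "((1 + (\<beta>1 + \<beta>2) / u) * \<Phi> + \<beta>1 / u) * (\<Phi> - 1) = \<Phi>^2" using qeq by simp
qed

lemma optimal_case_i:
  fixes \<alpha>1 \<alpha>2 \<beta>1 \<beta>2 lam :: real
  assumes nn: "\<alpha>1 \<ge> 0" "\<alpha>2 \<ge> 0" and A: "\<alpha>1 + \<alpha>2 > 0"
    and nnb: "\<beta>1 \<ge> 0" "\<beta>2 \<ge> 0" and lam: "lam > 0"
  defines "u \<equiv> (\<alpha>1 + \<alpha>2) * lam"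
  defines "a \<equiv> (3 * \<beta>1 + 2 * \<beta>2) / (2 * u)"
  defines "b \<equiv> (\<beta>1 + \<beta>2) / u"
  assumes a1: "a \<le> 1" and per: "periodic_rays r"
  shows "let x = (\<lambda>i. (((1 - a) * real i + (1 + b)) * 2 ^ i - b) * lam) in
           optimal_strategy \<alpha>1 \<beta>1 \<alpha>2 \<beta>2 lam x r \<and>
           comp_ratio \<alpha>1 \<beta>1 \<alpha>2 \<beta>2 lam x r = ereal (5 * \<alpha>1 + 4 * \<alpha>2)"
proof -
  define x where "x = (\<lambda>i::nat. (((1 - a) * real i + (1 + b)) * 2 ^ i - b) * lam)"
  have up: "u > 0" unfolding u_def using A lam by simp
  have ub: "(\<alpha>1 + \<alpha>2) * b * lam = \<beta>1 + \<beta>2" unfolding b_def u_def using A lam by simp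
  have ua: "2 * (\<alpha>1 + \<alpha>2) * a * lam = 3 * \<beta>1 + 2 * \<beta>2" unfolding a_def u_def using A lam by simp
  have bnn: "b \<ge> 0" unfolding b_def using up nnb by simp
  have xd: "x (Suc n) - x n = lam * 2^n * ((1 - a) * (real n + 2) + (1 + b))" for n
    unfolding x_def by (simp add: algebra_simps)
  have incr: "lam \<le> x (Suc n) - x n" for n
  proof -
    have "0 \<le> (1 - a) * (real n + 2)" using a1 by simp
    then have "1 * 1 \<le> (2::real)^n * ((1 - a) * (real n + 2) + (1 + b))"
      using bnn by (intro mult_mono) auto
    then show ?thesis unfolding xd using lam by (simp add: mult.assoc)
  qed
  have first: "roundtrip \<alpha>1 \<beta>1 \<alpha>2 \<beta>2 (x 1) + (\<alpha>1 * lam + \<beta>1) = (5 * \<alpha>1 + 4 * \<alpha>2) * lam"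
    unfolding x_def roundtrip_def using ua ub by (simp add: algebra_simps)
  have step: "roundtrip \<alpha>1 \<beta>1 \<alpha>2 \<beta>2 (x (n+2)) = (5 * \<alpha>1 + 4 * \<alpha>2 - \<alpha>1) * (x (Suc n) - x n)" for n
    unfolding xd unfolding x_def roundtrip_def using ub by (simp add: algebra_simps power_add)
  have "optimal_strategy \<alpha>1 \<beta>1 \<alpha>2 \<beta>2 lam x r \<and>
        comp_ratio \<alpha>1 \<beta>1 \<alpha>2 \<beta>2 lam x r = ereal (5 * \<alpha>1 + 4 * \<alpha>2)"
    by (rule equalizing_strategy_optimal[OF nn nnb lam per _ lam incr first step])
      (auto simp: x_def intro: turns_within_ge_case_i[OF A lam nnb])
  then show ?thesis unfolding x_def Let_def .
qed

lemma optimal_case_ii: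
  fixes \<alpha>1 \<alpha>2 \<beta>1 \<beta>2 lam :: real
  assumes nn: "\<alpha>1 \<ge> 0" "\<alpha>2 \<ge> 0" and A: "\<alpha>1 + \<alpha>2 > 0"
    and nnb: "\<beta>1 \<ge> 0" "\<beta>2 \<ge> 0" and lam: "lam > 0"
  defines "u \<equiv> (\<alpha>1 + \<alpha>2) * lam"
  defines "a \<equiv> (3 * \<beta>1 + 2 * \<beta>2) / (2 * u)"
  defines "b \<equiv> (\<beta>1 + \<beta>2) / u"
  defines "\<Phi> \<equiv> 1 + inverse ((2 * \<beta>1 + \<beta>2 - u
                 + sqrt ((2 * \<beta>1 + \<beta>2)^2 - \<beta>2^2 + (\<beta>2 + u)^2)) / (2 * u))"
  assumes a1: "a \<ge> 1" and per: "periodic_rays r"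
  shows "let x = (\<lambda>i. ((1 + b) * \<Phi> ^ i - b) * lam) in
           optimal_strategy \<alpha>1 \<beta>1 \<alpha>2 \<beta>2 lam x r \<and>
           comp_ratio \<alpha>1 \<beta>1 \<alpha>2 \<beta>2 lam x r =
             ereal (((\<alpha>1 + \<alpha>2) * x 1 + (\<beta>1 + \<beta>2) + (\<alpha>1 * lam + \<beta>1)) / lam)"
proof -
  define x where "x = (\<lambda>i::nat. ((1 + b) * \<Phi> ^ i - b) * lam)"
  define p where "p = \<beta>1 / u"
  define R where "R = ((\<alpha>1 + \<alpha>2) * x 1 + (\<beta>1 + \<beta>2) + (\<alpha>1 * lam + \<beta>1)) / lam"
  have up: "u > 0" unfolding u_def using A lam by simp
  have "2 * u \<le> 3 * \<beta>1 + 2 * \<beta>2" using a1 up unfolding a_def by (simp add: le_divide_eq)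
  note root = characteristic_root[OF nnb up this, folded \<Phi>_def b_def p_def]
  have bpos: "b > 0" unfolding b_def using \<open>2 * u \<le> 3 * \<beta>1 + 2 * \<beta>2\<close> up nnb by simp
  have p_eq: "\<beta>1 = p * ((\<alpha>1 + \<alpha>2) * lam)" and b_eq: "\<beta>1 + \<beta>2 = b * ((\<alpha>1 + \<alpha>2) * lam)"
    unfolding p_def b_def u_def[symmetric] using up by simp_all
  have RT: "R = \<alpha>1 + (\<alpha>1 + \<alpha>2) * ((1 + b) * \<Phi> + p)"
  proof -
    have x1: "(\<alpha>1 + \<alpha>2) * x 1 = (\<alpha>1 + \<alpha>2) * (1 + b) * \<Phi> * lam - (\<alpha>1 + \<alpha>2) * b * lam"
      unfolding x_def by (simp add: algebra_simps)
    have "(\<alpha>1 + (\<alpha>1 + \<alpha>2) * ((1 + b) * \<Phi> + p)) * lam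
            = \<alpha>1 * lam + (\<alpha>1 + \<alpha>2) * (1 + b) * \<Phi> * lam + (\<alpha>1 + \<alpha>2) * p * lam"
      by (simp add: algebra_simps)
    also have "\<dots> = R * lam"
      unfolding R_def using lam x1 p_eq b_eq by (simp add: mult.commute mult.left_commute)
    finally show ?thesis using lam by simp
  qed
  have xd: "x (Suc n) - x n = (1 + b) * lam * \<Phi>^n * (\<Phi> - 1)" for n
    unfolding x_def by (simp add: algebra_simps)
  have incr: "lam * (\<Phi> - 1) \<le> x (Suc n) - x n" for n
  proof -
    have "1 * 1 \<le> (1 + b) * \<Phi>^n" using bpos root(1) by (intro mult_mono) auto
    then show ?thesis unfolding xd using lam root(1) by (simp add: mult.assoc mult.left_commute)
  qed
  have first: "roundtrip \<alpha>1 \<beta>1 \<alpha>2 \<beta>2 (x 1) + (\<alpha>1 * lam + \<beta>1) = R * lam"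
  proof -
    have "R * lam = (\<alpha>1 + \<alpha>2) * x 1 + (\<beta>1 + \<beta>2) + (\<alpha>1 * lam + \<beta>1)"
      unfolding R_def using lam by simp
    then show ?thesis unfolding roundtrip_def by (simp add: algebra_simps)
  qed
  have step: "roundtrip \<alpha>1 \<beta>1 \<alpha>2 \<beta>2 (x (n+2)) = (R - \<alpha>1) * (x (Suc n) - x n)" for n
  proof -
    have "roundtrip \<alpha>1 \<beta>1 \<alpha>2 \<beta>2 (x (n+2)) = (\<alpha>1 + \<alpha>2) * ((1 + b) * lam * \<Phi>^n * \<Phi>^2)"
      unfolding x_def roundtrip_def using b_eq by (simp add: algebra_simps power_add power2_eq_square)
    also have "\<dots> = (\<alpha>1 + \<alpha>2) * ((1 + b) * lam * \<Phi>^n * (((1 + b) * \<Phi> + p) * (\<Phi> - 1)))"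
      using root(3) by simp
    also have "\<dots> = (R - \<alpha>1) * (x (Suc n) - x n)" unfolding xd RT by (simp add: algebra_simps)
    finally show ?thesis .
  qed
  have "optimal_strategy \<alpha>1 \<beta>1 \<alpha>2 \<beta>2 lam x r \<and> comp_ratio \<alpha>1 \<beta>1 \<alpha>2 \<beta>2 lam x r = ereal R"
    unfolding RT
    by (rule equalizing_strategy_optimal[OF nn nnb lam per _ _ incr first[unfolded RT] step[unfolded RT]])
      (auto simp: x_def root(1) lam intro: turns_within_ge_case_ii[OF A lam nnb p_eq b_eq bpos root])
  then show ?thesis unfolding x_def R_def Let_def .
qed

theorem theorem5:
  fixes \<alpha>1 \<alpha>2 \<beta>1 \<beta>2 lam :: real
  assumes "\<alpha>1 \<ge> 0" "\<alpha>2 \<ge> 0" "\<alpha>1 + \<alpha>2 > 0" "\<beta>1 \<ge> 0" "\<beta>2 \<ge> 0" "lam > 0"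
  defines "u \<equiv> (\<alpha>1 + \<alpha>2) * lam"
  defines "a \<equiv> (3 * \<beta>1 + 2 * \<beta>2) / (2 * u)"
  defines "b \<equiv> (\<beta>1 + \<beta>2) / u"
  defines "\<Phi> \<equiv> 1 + inverse ((2 * \<beta>1 + \<beta>2 - u
                 + sqrt ((2 * \<beta>1 + \<beta>2)^2 - \<beta>2^2 + (\<beta>2 + u)^2)) / (2 * u))"
  shows
    "(a \<le> 1 \<longrightarrow>
       (\<forall>r. periodic_rays r \<longrightarrow>
          (let x = (\<lambda>i. (((1 - a) * real i + (1 + b)) * 2 ^ i - b) * lam) in
            optimal_strategy \<alpha>1 \<beta>1 \<alpha>2 \<beta>2 lam x r \<and>
            comp_ratio \<alpha>1 \<beta>1 \<alpha>2 \<beta>2 lam x r = ereal (5 * \<alpha>1 + 4 * \<alpha>2))))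
     \<and>
     (a \<ge> 1 \<longrightarrow>
       (\<forall>r. periodic_rays r \<longrightarrow>
          (let x = (\<lambda>i. ((1 + b) * \<Phi> ^ i - b) * lam) in
            optimal_strategy \<alpha>1 \<beta>1 \<alpha>2 \<beta>2 lam x r \<and>
            comp_ratio \<alpha>1 \<beta>1 \<alpha>2 \<beta>2 lam x r =
              ereal (((\<alpha>1 + \<alpha>2) * x 1 + (\<beta>1 + \<beta>2) + (\<alpha>1 * lam + \<beta>1)) / lam))))"
  using optimal_case_i[OF assms(1-6)] optimal_case_ii[OF assms(1-6)]
  unfolding u_def a_def b_def \<Phi>_def by blast

end
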